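(* In every Choi-defined resource theory, the free operations coincide with the completely resource-non-generating operations: a channel $\mathcal{M}_{A\to B}$ is free if and only if for every system $R$ and every free state $\sigma_{AR}$, the state $(\mathcal{M}_{A\to B}\otimes\mathcal{I}_R)(\sigma_{AR})$ is free.
   Context: A quantum resource theory specifies, for all finite-dimensional systems, a set of free channels containing the identity, swap and discarding (partial trace) channels and closed under sequential and parallel composition; free states are those preparable by free channels (so free channels map free states to free states), and the family of free states is closed under tensor product, partial trace and system swaps. For a channel $\mathcal{M}_{A\to B}$ its renormalized Choi matrix is $\frac{1}{d_A}(\mathcal{M}_{A\to B}\otimes\mathcal{I}_{A'})(\Phi_{AA'})$, where $A'$ is a copy of $A$, $d_A=\dim A$ and $\Phi_{AA'}=\sum_{x,y}|x\rangle\langle y|_A\otimes|x\rangle\langle y|_{A'}$ for a fixed orthonormal basis. A Choi-defined resource theory (CDRT) is a resource theory in which a channel is free if and only if its renormalized Choi matrix is a free state. A channel $\mathcal{M}_{A\to B}$ is completely resource-non-generating (CRNG) if $(\mathcal{M}_{A\to B}\otimes\mathcal{I}_R)(\sigma_{AR})$ is free for every system $R$ and every free state $\sigma_{AR}$. *)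

theory Defs
  imports "Jordan_Normal_Form.Matrix"
begin

definition adj :: "complex mat \<Rightarrow> complex mat" where
  "adj K = mat (dim_col K) (dim_row K) (\<lambda>(i,j). cnj (K $$ (j,i)))"

text \<open>Kronecker product; the index (i,k) of a composite system is encoded as i * dim2 + k.\<close>
definition kron :: "complex mat \<Rightarrow> complex mat \<Rightarrow> complex mat" where
  "kron X Y = mat (dim_row X * dim_row Y) (dim_col X * dim_col Y)
     (\<lambda>(i,j). X $$ (i div dim_row Y, j div dim_col Y) * Y $$ (i mod dim_row Y, j mod dim_col Y))"

definition ket_bra :: "nat \<Rightarrow> nat \<Rightarrow> nat \<Rightarrow> complex mat" where
  "ket_bra d x y = mat d d (\<lambda>(i,j). if i = x \<and> j = y then 1 else 0)"

definition msum :: "nat \<Rightarrow> nat \<Rightarrow> complex mat list \<Rightarrow> complex mat" where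
  "msum r c Xs = mat r c (\<lambda>(i,j). \<Sum>X\<leftarrow>Xs. X $$ (i,j))"

type_synonym chan = "complex mat \<Rightarrow> complex mat"

text \<open>A quantum channel (CPTP map) from a d_A-dimensional to a d_B-dimensional system, given
  in Kraus form. A channel is represented canonically: it maps every matrix that is not
  d_A x d_A to the zero matrix, so that channels are equal iff they act equally on
  operators of the input system.\<close>
definition is_channel :: "nat \<Rightarrow> nat \<Rightarrow> chan \<Rightarrow> bool" where
  "is_channel dA dB M \<longleftrightarrow>
     (\<exists>Ks. (\<forall>K\<in>set Ks. K \<in> carrier_mat dB dA) \<and>
           msum dA dA (map (\<lambda>K. adj K * K) Ks) = 1\<^sub>m dA \<and>
           (\<forall>X\<in>carrier_mat dA dA. M X = msum dB dB (map (\<lambda>K. K * X * adj K) Ks))) \<and>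
     (\<forall>X. X \<notin> carrier_mat dA dA \<longrightarrow> M X = 0\<^sub>m dB dB)"

definition id_chan :: "nat \<Rightarrow> chan" where
  "id_chan d X = (if X \<in> carrier_mat d d then X else 0\<^sub>m d d)"

definition seq_chan :: "chan \<Rightarrow> chan \<Rightarrow> chan" where
  "seq_chan N M = (\<lambda>X. N (M X))"

text \<open>Parallel composition M (x) N of a channel M : dA -> dB and N : dC -> dD, defined by
  linear extension of (M (x) N)(E_ij (x) E_kl) = M(E_ij) (x) N(E_kl).\<close>
definition par_chan :: "nat \<Rightarrow> nat \<Rightarrow> nat \<Rightarrow> nat \<Rightarrow> chan \<Rightarrow> chan \<Rightarrow> chan" where
  "par_chan dA dB dC dD M N X =
     (if X \<in> carrier_mat (dA * dC) (dA * dC) then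
        mat (dB * dD) (dB * dD) (\<lambda>(p,q).
          \<Sum>i<dA. \<Sum>j<dA. \<Sum>k<dC. \<Sum>l<dC.
            X $$ (i * dC + k, j * dC + l) * kron (M (ket_bra dA i j)) (N (ket_bra dC k l)) $$ (p,q))
      else 0\<^sub>m (dB * dD) (dB * dD))"

definition swap_chan :: "nat \<Rightarrow> nat \<Rightarrow> chan" where
  "swap_chan dA dB X =
     (if X \<in> carrier_mat (dA * dB) (dA * dB) then
        mat (dB * dA) (dB * dA) (\<lambda>(p,q).
          X $$ ((p mod dA) * dB + p div dA, (q mod dA) * dB + q div dA))
      else 0\<^sub>m (dB * dA) (dB * dA))"

definition ptrace_chan :: "nat \<Rightarrow> nat \<Rightarrow> chan" where
  "ptrace_chan dA dB X =
     (if X \<in> carrier_mat (dA * dB) (dA * dB) then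
        mat dA dA (\<lambda>(i,j). \<Sum>k<dB. X $$ (i * dB + k, j * dB + k))
      else 0\<^sub>m dA dA)"

definition trace_chan :: "nat \<Rightarrow> chan" where
  "trace_chan dA X = (if X \<in> carrier_mat dA dA then mat 1 1 (\<lambda>_. \<Sum>i<dA. X $$ (i,i)) else 0\<^sub>m 1 1)"

definition prep_chan :: "nat \<Rightarrow> complex mat \<Rightarrow> chan" where
  "prep_chan d \<rho> X = (if X \<in> carrier_mat 1 1 then X $$ (0,0) \<cdot>\<^sub>m \<rho> else 0\<^sub>m d d)"

text \<open>Renormalized Choi matrix (1/d_A) (M (x) I_A')(Phi_AA').\<close>
definition choi :: "nat \<Rightarrow> nat \<Rightarrow> chan \<Rightarrow> complex mat" where
  "choi dA dB M = mat (dB * dA) (dB * dA) (\<lambda>(p,q). (1 / of_nat dA) *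
     (\<Sum>x<dA. \<Sum>y<dA. kron (M (ket_bra dA x y)) (ket_bra dA x y) $$ (p,q)))"

text \<open>Systems form an abstract type 's with a dimension, a tensor product and a trivial
  (one-dimensional) system.\<close>

definition free_states ::
  "('s \<Rightarrow> nat) \<Rightarrow> 's \<Rightarrow> ('s \<Rightarrow> 's \<Rightarrow> chan set) \<Rightarrow> 's \<Rightarrow> complex mat set" where
  "free_states sdim triv Free A = {\<rho>. prep_chan (sdim A) \<rho> \<in> Free triv A}"

definition resource_theory ::
  "('s \<Rightarrow> nat) \<Rightarrow> ('s \<Rightarrow> 's \<Rightarrow> 's) \<Rightarrow> 's \<Rightarrow> ('s \<Rightarrow> 's \<Rightarrow> chan set) \<Rightarrow> bool" where
  "resource_theory sdim tens triv Free \<longleftrightarrow>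
     (\<forall>A. sdim A > 0) \<and> sdim triv = 1 \<and> (\<forall>A B. sdim (tens A B) = sdim A * sdim B) \<and>
     (\<forall>A B M. M \<in> Free A B \<longrightarrow> is_channel (sdim A) (sdim B) M) \<and>
     (\<forall>A. id_chan (sdim A) \<in> Free A A) \<and>
     (\<forall>A B. swap_chan (sdim A) (sdim B) \<in> Free (tens A B) (tens B A)) \<and>
     (\<forall>A B. ptrace_chan (sdim A) (sdim B) \<in> Free (tens A B) A) \<and>
     (\<forall>A. trace_chan (sdim A) \<in> Free A triv) \<and>
     (\<forall>A B C M N. M \<in> Free A B \<longrightarrow> N \<in> Free B C \<longrightarrow> seq_chan N M \<in> Free A C) \<and>
     (\<forall>A B C D M N. M \<in> Free A B \<longrightarrow> N \<in> Free C D \<longrightarrow>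
        par_chan (sdim A) (sdim B) (sdim C) (sdim D) M N \<in> Free (tens A C) (tens B D)) \<and>
     \<comment> \<open>properties of the family of free states stated in the paper\<close>
     (\<forall>A B M \<rho>. M \<in> Free A B \<longrightarrow> \<rho> \<in> free_states sdim triv Free A \<longrightarrow>
        M \<rho> \<in> free_states sdim triv Free B) \<and>
     (\<forall>A B \<rho> \<sigma>. \<rho> \<in> free_states sdim triv Free A \<longrightarrow> \<sigma> \<in> free_states sdim triv Free B \<longrightarrow>
        kron \<rho> \<sigma> \<in> free_states sdim triv Free (tens A B)) \<and>
     (\<forall>A B \<rho>. \<rho> \<in> free_states sdim triv Free (tens A B) \<longrightarrow>
        ptrace_chan (sdim A) (sdim B) \<rho> \<in> free_states sdim triv Free A) \<and>
     (\<forall>A B \<rho>. \<rho> \<in> free_states sdim triv Free (tens A B) \<longrightarrow>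
        swap_chan (sdim A) (sdim B) \<rho> \<in> free_states sdim triv Free (tens B A))"

definition choi_defined ::
  "('s \<Rightarrow> nat) \<Rightarrow> ('s \<Rightarrow> 's \<Rightarrow> 's) \<Rightarrow> 's \<Rightarrow> ('s \<Rightarrow> 's \<Rightarrow> chan set) \<Rightarrow> bool" where
  "choi_defined sdim tens triv Free \<longleftrightarrow>
     resource_theory sdim tens triv Free \<and>
     (\<forall>A B M. is_channel (sdim A) (sdim B) M \<longrightarrow>
        (M \<in> Free A B \<longleftrightarrow> choi (sdim A) (sdim B) M \<in> free_states sdim triv Free (tens B A)))"

definition CRNG ::
  "('s \<Rightarrow> nat) \<Rightarrow> ('s \<Rightarrow> 's \<Rightarrow> 's) \<Rightarrow> 's \<Rightarrow> ('s \<Rightarrow> 's \<Rightarrow> chan set) \<Rightarrow> 's \<Rightarrow> 's \<Rightarrow> chan \<Rightarrow> bool" where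
  "CRNG sdim tens triv Free A B M \<longleftrightarrow>
     (\<forall>R \<sigma>. \<sigma> \<in> free_states sdim triv Free (tens A R) \<longrightarrow>
        par_chan (sdim A) (sdim B) (sdim R) (sdim R) M (id_chan (sdim R)) \<sigma>
          \<in> free_states sdim triv Free (tens B R))"

end

theory Submission
  imports Defs
begin

text \<open>A free channel tensored with the free identity channel is free, and free channels map
  free states to free states; so every free channel is CRNG. Conversely, the identity channel is
  free, so in a Choi-defined theory its renormalized Choi matrix, the maximally entangled state
  \<open>\<Phi>/d\<^sub>A\<close>, is a free state. Feeding it to \<open>M \<otimes> I\<close> yields exactly the Choi matrix of \<open>M\<close>, which
  is therefore free whenever \<open>M\<close> is CRNG; hence \<open>M\<close> is free.\<close>

lemma ket_bra_carrier [simp]: "ket_bra d x y \<in> carrier_mat d d"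
  by (simp add: ket_bra_def)

lemma pair_index_less:
  fixes i k m n :: nat
  assumes "i < m" "k < n"
  shows "i * n + k < m * n"
  using assms mult_le_mono1[of "Suc i" m n] by simp

lemma sum_sum_delta:
  fixes f :: "nat \<Rightarrow> nat \<Rightarrow> 'a :: comm_monoid_add"
  assumes "i < d" "j < d"
  shows "(\<Sum>k<d. \<Sum>l<d. if i = k \<and> j = l then f k l else 0) = f i j"
proof -
  have "(\<Sum>k<d. \<Sum>l<d. if i = k \<and> j = l then f k l else 0)
      = (\<Sum>k<d. if i = k then (\<Sum>l<d. if j = l then f k l else 0) else 0)"
    by (rule sum.cong) auto
  then show ?thesis
    using assms by simp
qed

lemma choi_id_chan_entry:
  assumes "i < d" "k < d" "j < d" "l < d"
  shows "choi d d (id_chan d) $$ (i * d + k, j * d + l) = (if i = k \<and> j = l then 1 / of_nat d else 0)"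
proof -
  have row: "i * d + k < d * d" and col: "j * d + l < d * d"
    using assms by (simp_all add: pair_index_less)
  have "kron (id_chan d (ket_bra d x y)) (ket_bra d x y) $$ (i * d + k, j * d + l)
      = (if i = x \<and> j = y then (if k = x \<and> l = y then 1 else 0) else 0)" for x y
    using row col assms by (simp add: kron_def id_chan_def ket_bra_def)
  then have "choi d d (id_chan d) $$ (i * d + k, j * d + l) = (1 / of_nat d) *
      (\<Sum>x<d. \<Sum>y<d. if i = x \<and> j = y then (if k = x \<and> l = y then 1 else 0) else 0)"
    using row col by (simp add: choi_def)
  also have "\<dots> = (if i = k \<and> j = l then 1 / of_nat d else 0)"
    using assms by (auto simp: sum_sum_delta[where f = "\<lambda>x y. if k = x \<and> l = y then 1 else 0"])
  finally show ?thesis .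
qed

lemma par_chan_id_choi_id_chan:
  "par_chan d dB d d M (id_chan d) (choi d d (id_chan d)) = choi d dB M"
proof (rule eq_matI)
  have choi_id_carrier: "choi d d (id_chan d) \<in> carrier_mat (d * d) (d * d)"
    by (simp add: choi_def)
  then show "dim_row (par_chan d dB d d M (id_chan d) (choi d d (id_chan d))) = dim_row (choi d dB M)"
    and "dim_col (par_chan d dB d d M (id_chan d) (choi d d (id_chan d))) = dim_col (choi d dB M)"
    by (simp_all add: par_chan_def choi_def)
  fix p q
  assume "p < dim_row (choi d dB M)" "q < dim_col (choi d dB M)"
  then have pq: "p < dB * d" "q < dB * d"
    by (auto simp: choi_def)
  define K where "K i j k l = kron (M (ket_bra d i j)) (id_chan d (ket_bra d k l)) $$ (p, q)" for i j k l
  have "par_chan d dB d d M (id_chan d) (choi d d (id_chan d)) $$ (p, q)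
      = (\<Sum>i<d. \<Sum>j<d. \<Sum>k<d. \<Sum>l<d. choi d d (id_chan d) $$ (i * d + k, j * d + l) * K i j k l)"
    using choi_id_carrier pq by (simp add: par_chan_def K_def)
  also have "\<dots> = (\<Sum>i<d. \<Sum>j<d. \<Sum>k<d. \<Sum>l<d. if i = k \<and> j = l then 1 / of_nat d * K k l k l else 0)"
    by (intro sum.cong refl) (auto simp: choi_id_chan_entry)
  also have "\<dots> = (\<Sum>i<d. \<Sum>j<d. 1 / of_nat d * K i j i j)"
    by (intro sum.cong refl) (rule sum_sum_delta, auto)
  also have "\<dots> = choi d dB M $$ (p, q)"
    using pq by (simp add: choi_def K_def id_chan_def sum_distrib_left)
  finally show "par_chan d dB d d M (id_chan d) (choi d d (id_chan d)) $$ (p, q) = choi d dB M $$ (p, q)" .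
qed

lemma free_imp_CRNG:
  assumes "resource_theory sdim tens triv Free" and "M \<in> Free A B"
  shows "CRNG sdim tens triv Free A B M"
  unfolding CRNG_def
proof (intro allI impI)
  fix R \<sigma>
  assume "\<sigma> \<in> free_states sdim triv Free (tens A R)"
  moreover have "par_chan (sdim A) (sdim B) (sdim R) (sdim R) M (id_chan (sdim R)) \<in> Free (tens A R) (tens B R)"
    using assms by (simp add: resource_theory_def)
  moreover have "\<And>A B N \<rho>. N \<in> Free A B \<Longrightarrow> \<rho> \<in> free_states sdim triv Free A \<Longrightarrow>
      N \<rho> \<in> free_states sdim triv Free B"
    using assms(1) by (simp add: resource_theory_def)
  ultimately show "par_chan (sdim A) (sdim B) (sdim R) (sdim R) M (id_chan (sdim R)) \<sigma>
      \<in> free_states sdim triv Free (tens B R)"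
    by blast
qed

lemma choi_id_chan_free_state:
  assumes "choi_defined sdim tens triv Free"
  shows "choi (sdim A) (sdim A) (id_chan (sdim A)) \<in> free_states sdim triv Free (tens A A)"
proof -
  have "id_chan (sdim A) \<in> Free A A" and "is_channel (sdim A) (sdim A) (id_chan (sdim A))"
    using assms by (simp_all add: choi_defined_def resource_theory_def)
  moreover have "\<And>N. is_channel (sdim A) (sdim A) N \<Longrightarrow>
      N \<in> Free A A \<longleftrightarrow> choi (sdim A) (sdim A) N \<in> free_states sdim triv Free (tens A A)"
    using assms by (simp add: choi_defined_def)
  ultimately show ?thesis
    by blast
qed

lemma CRNG_imp_free:
  assumes "choi_defined sdim tens triv Free" and "is_channel (sdim A) (sdim B) M"
    and "CRNG sdim tens triv Free A B M"
  shows "M \<in> Free A B"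
proof -
  have "par_chan (sdim A) (sdim B) (sdim A) (sdim A) M (id_chan (sdim A))
      (choi (sdim A) (sdim A) (id_chan (sdim A))) \<in> free_states sdim triv Free (tens B A)"
    using assms(3) choi_id_chan_free_state[OF assms(1)] unfolding CRNG_def by blast
  then have "choi (sdim A) (sdim B) M \<in> free_states sdim triv Free (tens B A)"
    by (simp add: par_chan_id_choi_id_chan)
  then show ?thesis
    using assms(1,2) by (simp add: choi_defined_def)
qed

theorem theorem2:
  fixes sdim :: "'s \<Rightarrow> nat" and tens :: "'s \<Rightarrow> 's \<Rightarrow> 's" and triv :: 's
    and Free :: "'s \<Rightarrow> 's \<Rightarrow> chan set" and A B :: 's and M :: chan
  assumes "choi_defined sdim tens triv Free"
    and "is_channel (sdim A) (sdim B) M"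
  shows "M \<in> Free A B \<longleftrightarrow> CRNG sdim tens triv Free A B M"
proof -
  have "resource_theory sdim tens triv Free"
    using assms(1) by (simp add: choi_defined_def)
  then show ?thesis
    using free_imp_CRNG CRNG_imp_free[OF assms] by (intro iffI)
qed

end
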